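(* Let $f:\mathbb{Z}^n\to\mathbb{R}\cup\{+\infty\}$ be a function satisfying condition (SSQM$^\natural$). For $x,y\in\mathrm{dom}\,f$, if $f(x)>f(y)$, then there exist some $i\in\mathrm{supp}^+(x-y)\cup\{0\}$ and $j\in\mathrm{supp}^-(x-y)\cup\{0\}$ satisfying $f(x)>f(x-\chi_i+\chi_j)$.
   Context: $N=\{1,\dots,n\}$. For $i\in N$, $\chi_i\in\{0,1\}^n$ is the characteristic vector of $i$, and $\chi_0=0$. $\mathrm{dom}\,f=\{x\in\mathbb{Z}^n\mid f(x)<+\infty\}$. For $x,y\in\mathbb{Z}^n$, $\mathrm{supp}^+(x-y)=\{i\in N\mid x(i)>y(i)\}$ and $\mathrm{supp}^-(x-y)=\{j\in N\mid x(j)<y(j)\}$. Condition (SSQM$^\natural$): for all $x,y\in\mathrm{dom}\,f$ and all $i\in\mathrm{supp}^+(x-y)$ there exists $j\in\mathrm{supp}^-(x-y)\cup\{0\}$ such that at least one of the following holds: (a) $f(x-\chi_i+\chi_j)<f(x)$; (b) $f(y+\chi_i-\chi_j)<f(y)$; (c) $f(x-\chi_i+\chi_j)=f(x)$ and $f(y+\chi_i-\chi_j)=f(y)$. *)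

theory Defs
  imports "HOL-Analysis.Analysis"
begin

text \<open>Indices in N \<union> {0} are modelled as 'n option, with None playing the role of 0.
  Functions \<int>^n \<rightarrow> \<real> \<union> {+\<infinity>} are ereal-valued functions that never take -\<infinity>.\<close>

definition chi :: "'n::finite option \<Rightarrow> int ^ 'n" where
  "chi i = (case i of None \<Rightarrow> 0 | Some k \<Rightarrow> (\<chi> l. if l = k then 1 else 0))"

definition dom_f :: "(int ^ 'n::finite \<Rightarrow> ereal) \<Rightarrow> (int ^ 'n) set" where
  "dom_f f = {x. f x < \<infinity>}"

definition supp_pos :: "int ^ 'n::finite \<Rightarrow> int ^ 'n \<Rightarrow> 'n set" where
  "supp_pos x y = {i. x $ i > y $ i}"

definition supp_neg :: "int ^ 'n::finite \<Rightarrow> int ^ 'n \<Rightarrow> 'n set" where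
  "supp_neg x y = {j. x $ j < y $ j}"

definition SSQM_nat :: "(int ^ 'n::finite \<Rightarrow> ereal) \<Rightarrow> bool" where
  "SSQM_nat f \<longleftrightarrow>
    (\<forall>x \<in> dom_f f. \<forall>y \<in> dom_f f. \<forall>i \<in> supp_pos x y.
       \<exists>j \<in> Some ` supp_neg x y \<union> {None}.
         f (x - chi (Some i) + chi j) < f x
       \<or> f (y + chi (Some i) - chi j) < f y
       \<or> (f (x - chi (Some i) + chi j) = f x \<and> f (y + chi (Some i) - chi j) = f y))"

end

theory Submission
  imports Defs
begin

text \<open>Fix x and let y descend towards x. Whenever the exchange axiom, applied to x and y, does
  not already give a strict improvement at x, it yields an exchange y' = y + chi a - chi b that moves
  y one step closer to x in the l1 distance without increasing f and without enlarging the supports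
  of x - y. As f(y') \<le> f(y) < f(x), induction on the distance finishes the argument. When
  supp+(x - y) is empty, the axiom is applied with the roles of x and y exchanged.\<close>

abbreviation supp_pos_0 :: "int ^ 'n::finite \<Rightarrow> int ^ 'n \<Rightarrow> 'n option set" where
  "supp_pos_0 x y \<equiv> Some ` supp_pos x y \<union> {None}"

abbreviation supp_neg_0 :: "int ^ 'n::finite \<Rightarrow> int ^ 'n \<Rightarrow> 'n option set" where
  "supp_neg_0 x y \<equiv> Some ` supp_neg x y \<union> {None}"

definition l1_dist :: "int ^ 'n::finite \<Rightarrow> int ^ 'n \<Rightarrow> nat" where
  "l1_dist x y = (\<Sum>l\<in>UNIV. nat \<bar>x $ l - y $ l\<bar>)"

lemma chi_nth: "chi a $ l = (if a = Some l then 1 else 0)"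
  by (cases a) (auto simp: chi_def)

lemma chi_None: "chi None = 0"
  by (simp add: chi_def)

lemma exchange_nth:
  "(y + chi a - chi b) $ l = y $ l + (if a = Some l then 1 else 0) - (if b = Some l then 1 else 0)"
  by (simp add: chi_nth)

lemma supp_pos_exchange_subset:
  assumes "a \<in> supp_pos_0 x y" "b \<in> supp_neg_0 x y"
  shows "supp_pos x (y + chi a - chi b) \<subseteq> supp_pos x y"
  using assms unfolding supp_pos_def supp_neg_def exchange_nth by auto

lemma supp_neg_exchange_subset:
  assumes "a \<in> supp_pos_0 x y" "b \<in> supp_neg_0 x y"
  shows "supp_neg x (y + chi a - chi b) \<subseteq> supp_neg x y"
  using assms unfolding supp_pos_def supp_neg_def exchange_nth by auto

lemma l1_dist_exchange_less:
  assumes a: "a \<in> supp_pos_0 x y" and b: "b \<in> supp_neg_0 x y" and ab: "a \<noteq> None \<or> b \<noteq> None"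
  shows "l1_dist x (y + chi a - chi b) < l1_dist x y"
  unfolding l1_dist_def
proof (rule sum_strict_mono_ex1)
  show "\<forall>l\<in>UNIV. nat \<bar>x $ l - (y + chi a - chi b) $ l\<bar> \<le> nat \<bar>x $ l - y $ l\<bar>"
    using a b unfolding supp_pos_def supp_neg_def exchange_nth by auto
  obtain k where "a = Some k \<or> (a = None \<and> b = Some k)"
    using ab by (cases a; cases b) auto
  then have "nat \<bar>x $ k - (y + chi a - chi b) $ k\<bar> < nat \<bar>x $ k - y $ k\<bar>"
    using a b unfolding supp_pos_def supp_neg_def exchange_nth by auto
  then show "\<exists>l\<in>UNIV. nat \<bar>x $ l - (y + chi a - chi b) $ l\<bar> < nat \<bar>x $ l - y $ l\<bar>"
    by blast
qed simp

lemma SSQM_nat_improve_or_approach: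
  assumes S: "SSQM_nat f" and xd: "x \<in> dom_f f" and yd: "y \<in> dom_f f" and "x \<noteq> y"
  shows "(\<exists>i\<in>supp_pos_0 x y. \<exists>j\<in>supp_neg_0 x y. f (x - chi i + chi j) < f x)
    \<or> (\<exists>a\<in>supp_pos_0 x y. \<exists>b\<in>supp_neg_0 x y. (a \<noteq> None \<or> b \<noteq> None) \<and> f (y + chi a - chi b) \<le> f y)"
proof (cases "supp_pos x y = {}")
  case False
  then obtain i where i: "i \<in> supp_pos x y"
    by auto
  then obtain j where j: "j \<in> supp_neg_0 x y" and
    "f (x - chi (Some i) + chi j) < f x \<or> f (y + chi (Some i) - chi j) < f y
      \<or> (f (x - chi (Some i) + chi j) = f x \<and> f (y + chi (Some i) - chi j) = f y)"
    using S xd yd unfolding SSQM_nat_def by blast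
  then have "f (x - chi (Some i) + chi j) < f x \<or> f (y + chi (Some i) - chi j) \<le> f y"
    by auto
  then show ?thesis
    using i j by blast
next
  case True
  obtain k where "x $ k \<noteq> y $ k"
    using \<open>x \<noteq> y\<close> by (auto simp: vec_eq_iff)
  with True have k: "k \<in> supp_pos y x" "k \<in> supp_neg x y"
    unfolding supp_pos_def supp_neg_def by (auto dest: spec[of _ k])
  obtain j where j: "j \<in> supp_neg_0 y x" and
    "f (y - chi (Some k) + chi j) < f y \<or> f (x + chi (Some k) - chi j) < f x
      \<or> (f (y - chi (Some k) + chi j) = f y \<and> f (x + chi (Some k) - chi j) = f x)"
    using S xd yd k(1) unfolding SSQM_nat_def by blast
  moreover have "j = None"
    using j True unfolding supp_pos_def supp_neg_def by auto
  ultimately have "f (y - chi (Some k)) \<le> f y \<or> f (x + chi (Some k)) < f x"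
    by (auto simp: chi_None)
  then show ?thesis
  proof
    assume "f (y - chi (Some k)) \<le> f y"
    then show ?thesis
      using k(2) by (intro disjI2 bexI[of _ None] bexI[of _ "Some k"]) (auto simp: chi_None)
  next
    assume "f (x + chi (Some k)) < f x"
    then show ?thesis
      using k(2) by (intro disjI1 bexI[of _ None] bexI[of _ "Some k"]) (auto simp: chi_None)
  qed
qed

theorem lemma2p4:
  fixes f :: "int ^ 'n::finite \<Rightarrow> ereal" and x y :: "int ^ 'n"
  assumes "\<forall>z. f z \<noteq> -\<infinity>"
    and "SSQM_nat f"
    and "x \<in> dom_f f" and "y \<in> dom_f f"
    and "f x > f y"
  shows "\<exists>i \<in> Some ` supp_pos x y \<union> {None}. \<exists>j \<in> Some ` supp_neg x y \<union> {None}.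
           f x > f (x - chi i + chi j)"
  using assms(4,5)
proof (induction "l1_dist x y" arbitrary: y rule: less_induct)
  case (less y)
  then have "x \<noteq> y"
    by auto
  from SSQM_nat_improve_or_approach[OF assms(2,3) \<open>y \<in> dom_f f\<close> this] show ?case
  proof
    assume "\<exists>a\<in>supp_pos_0 x y. \<exists>b\<in>supp_neg_0 x y. (a \<noteq> None \<or> b \<noteq> None) \<and> f (y + chi a - chi b) \<le> f y"
    then obtain a b where a: "a \<in> supp_pos_0 x y" and b: "b \<in> supp_neg_0 x y"
      and ab: "a \<noteq> None \<or> b \<noteq> None" and le: "f (y + chi a - chi b) \<le> f y"
      by blast
    have "y + chi a - chi b \<in> dom_f f" "f (y + chi a - chi b) < f x"
      using less.prems le unfolding dom_f_def by auto
    with less.hyps[OF l1_dist_exchange_less[OF a b ab]] show ?case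
      using supp_pos_exchange_subset[OF a b] supp_neg_exchange_subset[OF a b] by blast
  qed auto
qed

end
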